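(* Let $K$ be a field, $c\in K\setminus\{0\}$, and let $(x_j)_{j\in\mathbb{Z}}$ be indeterminates; define $x'_{2l}=x_{2l}$ and $x'_{2l+1}=-x_{2l+1}$ for all $l\in\mathbb{Z}$. Let $k\ge0$ and $j\in\mathbb{Z}$. (a) If $k\equiv0\pmod4$, then $P_k^{-c}(x'_j,\dots,x'_{j+k-1})=P_k^c(x_j,\dots,x_{j+k-1})$. (b) If $k\equiv1\pmod4$, then $P_k^{-c}(x'_j,\dots,x'_{j+k-1})=P_k^c(x_j,\dots,x_{j+k-1})$ for $j$ even and $=-P_k^c(x_j,\dots,x_{j+k-1})$ for $j$ odd. (c) If $k\equiv2\pmod4$, then $P_k^{-c}(x'_j,\dots,x'_{j+k-1})=-P_k^c(x_j,\dots,x_{j+k-1})$. (d) If $k\equiv3\pmod4$, then $P_k^{-c}(x'_j,\dots,x'_{j+k-1})=-P_k^c(x_j,\dots,x_{j+k-1})$ for $j$ even and $=P_k^c(x_j,\dots,x_{j+k-1})$ for $j$ odd.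
   Context: For a nonzero $a\in K$, the $a$-continuant polynomials $P_k^a$ ($k\ge -1$) are defined by $P_{-1}^a=0$, $P_0^a=1$ and, for $k\ge1$, $P_k^a(y_1,\dots,y_k)=y_kP_{k-1}^a(y_1,\dots,y_{k-1})+aP_{k-2}^a(y_1,\dots,y_{k-2})$, applied to any sequence of consecutive variables. *)

theory Defs
  imports Main
begin

fun continuant :: "'a::comm_ring_1 \<Rightarrow> (nat \<Rightarrow> 'a) \<Rightarrow> nat \<Rightarrow> 'a" where
  "continuant a y 0 = 1"
| "continuant a y (Suc 0) = y 1"
| "continuant a y (Suc (Suc k)) = y (Suc (Suc k)) * continuant a y (Suc k) + a * continuant a y k"

text \<open>P_k^a(z_j, ..., z_{j+k-1}) for an integer-indexed family z.\<close>
definition contAt :: "'a::comm_ring_1 \<Rightarrow> (int \<Rightarrow> 'a) \<Rightarrow> int \<Rightarrow> nat \<Rightarrow> 'a" where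
  "contAt a z j k = continuant a (\<lambda>i. z (j + int i - 1)) k"

definition signAlt :: "(int \<Rightarrow> 'a::comm_ring_1) \<Rightarrow> int \<Rightarrow> 'a" where
  "signAlt x i = (if even i then x i else - x i)"

end

theory Submission
  imports Defs
begin

text \<open>Replacing each y_i by e_i y_i, where consecutive signs satisfy e_i e_{i+1} = -1,
  and a by -a multiplies P_k^a by e_1 \<cdots> e_k: in the recurrence both terms pick up the same
  factor. Alternating signs x'_i = \<plusminus> x_i are such a sign sequence, and e_1 \<cdots> e_k is
  (-1)^{\<lfloor>k/2\<rfloor>} for k even and (-1)^{\<lfloor>k/2\<rfloor>} e_1 for k odd, which gives the four cases mod 4.\<close>

lemma continuant_rescale:
  fixes a u :: "'a::comm_ring_1"
  assumes consecutive: "\<And>i. e i * e (Suc i) = u"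
  shows "continuant (u * a) (\<lambda>i. e i * y i) k = (\<Prod>i=1..k. e i) * continuant a y k"
proof (induction a y k rule: continuant.induct)
  case (3 a y k)
  have prod_extend: "(\<Prod>i=1..Suc k. e i) * e (Suc (Suc k)) = (\<Prod>i=1..Suc (Suc k). e i)"
    by (simp add: prod.nat_ivl_Suc')
  have prod_extend_pair: "(\<Prod>i=1..k. e i) * u = (\<Prod>i=1..Suc (Suc k). e i)"
    using consecutive[of "Suc k"] by (simp add: prod.nat_ivl_Suc' mult.assoc)
  have "continuant (u * a) (\<lambda>i. e i * y i) (Suc (Suc k))
      = e (Suc (Suc k)) * y (Suc (Suc k)) * continuant (u * a) (\<lambda>i. e i * y i) (Suc k)
        + u * a * continuant (u * a) (\<lambda>i. e i * y i) k"
    by simp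
  also have "\<dots> = ((\<Prod>i=1..Suc k. e i) * e (Suc (Suc k))) * y (Suc (Suc k)) * continuant a y (Suc k)
        + ((\<Prod>i=1..k. e i) * u) * a * continuant a y k"
    using 3 by (simp add: algebra_simps)
  finally show ?case
    unfolding prod_extend prod_extend_pair by (simp add: algebra_simps)
qed simp_all

lemma prod_alternating:
  fixes e :: "nat \<Rightarrow> 'a::comm_ring_1"
  assumes alternating: "\<And>i. e i * e (Suc i) = -1"
  shows "(\<Prod>i=1..k. e i) = (-1) ^ (k div 2) * (if odd k then e 1 else 1)"
proof (induction k rule: induct_nat_012)
  case (ge2 k)
  have "(\<Prod>i=1..Suc (Suc k). e i) = - (\<Prod>i=1..k. e i)"
    using alternating[of "Suc k"] by (simp add: prod.nat_ivl_Suc' mult.assoc)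
  with ge2.IH(1) show ?case by simp
qed simp_all

lemma contAt_signAlt:
  fixes c :: "'a::comm_ring_1"
  shows "contAt (-c) (signAlt x) j k =
    (-1) ^ (k div 2) * (if odd k \<and> odd j then -1 else 1) * contAt c x j k"
proof -
  define e where "e i = (if even (j + int i - 1) then 1 else - 1 :: 'a)" for i
  have alternating: "e i * e (Suc i) = -1" for i
    by (auto simp: e_def)
  have "contAt (-c) (signAlt x) j k = continuant (-1 * c) (\<lambda>i. e i * x (j + int i - 1)) k"
    unfolding contAt_def signAlt_def e_def by (simp add: if_distrib[of "\<lambda>s. s * _"] cong: if_cong)
  also have "\<dots> = (\<Prod>i=1..k. e i) * contAt c x j k"
    unfolding contAt_def by (rule continuant_rescale[where e = e, OF alternating])
  also have "\<dots> = (-1) ^ (k div 2) * (if odd k then e 1 else 1) * contAt c x j k"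
    by (simp only: prod_alternating[where e = e, OF alternating])
  finally show ?thesis
    by (simp add: e_def)
qed

theorem mainTheorem6:
  fixes c :: "'a::comm_ring_1" and x :: "int \<Rightarrow> 'a" and k :: nat and j :: int
  assumes "c \<noteq> 0"
  shows "(k mod 4 = 0 \<longrightarrow> contAt (-c) (signAlt x) j k = contAt c x j k)
       \<and> (k mod 4 = 1 \<longrightarrow> contAt (-c) (signAlt x) j k =
            (if even j then contAt c x j k else - contAt c x j k))
       \<and> (k mod 4 = 2 \<longrightarrow> contAt (-c) (signAlt x) j k = - contAt c x j k)
       \<and> (k mod 4 = 3 \<longrightarrow> contAt (-c) (signAlt x) j k =
            (if even j then - contAt c x j k else contAt c x j k))"
proof -
  have "even (k div 2) \<longleftrightarrow> k mod 4 = 0 \<or> k mod 4 = 1"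
    and "odd k \<longleftrightarrow> k mod 4 = 1 \<or> k mod 4 = 3"
    by presburger+
  then show ?thesis
    by (auto simp: contAt_signAlt)
qed

end
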